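(* Let $\tau>0$ and $\mathbf A\in\mathcal S_{++}^n$. A pair $(\mathbf W_\ast,\mathbf M_\ast)$ lies in $\mathcal E$ if and only if $\mathbf W_\ast=\mathbf U\mathbf S\mathbf V^\top$ and $\mathbf M_\ast=\mathbf U\mathbf S\mathbf U^\top$, where: - $\mathbf U$ is a $k\times k$ orthogonal matrix; - $\mathbf V$ is an $n\times k$ matrix whose columns are orthonormal eigenvectors of $\mathbf A$; - $\mathbf S$ is the $k\times k$ diagonal matrix whose $i$-th diagonal entry is the eigenvalue of $\mathbf A$ for the $i$-th column of $\mathbf V$.
   Context: Let $n>k\ge 1$ be integers. Let $\mathbf A$ be an $n\times n$ symmetric positive definite matrix; write $\mathbf A\in\mathcal S_{++}^n$. Here $\mathcal S_{++}^m$ denotes the $m\times m$ symmetric positive definite matrices, and $\mathcal D:=\mathbb R^{k\times n}\times\mathcal S_{++}^k$. For a parameter $\tau>0$, consider the ODE $(\ast)$ on $\mathcal D$: $$\tfrac12\tfrac{d\mathbf W}{dt}=\mathbf M^{-1}\mathbf W\mathbf A-\mathbf W,\qquad \tau\tfrac{d\mathbf M}{dt}=\mathbf M^{-1}\mathbf W\mathbf A\mathbf W^\top\mathbf M^{-1}-\mathbf M.$$ $\mathcal E$ is the set of equilibria of $(\ast)$, i.e. the set of $(\mathbf W,\mathbf M)\in\mathcal D$ with $\mathbf M^{-1}\mathbf W\mathbf A=\mathbf W$ and $\mathbf M^{-1}\mathbf W\mathbf A\mathbf W^\top\mathbf M^{-1}=\mathbf M$. *)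

theory Defs
  imports "HOL-Analysis.Analysis"
begin

definition sym_pos_def :: "real^'m^'m \<Rightarrow> bool" where
  "sym_pos_def A \<longleftrightarrow> transpose A = A \<and> (\<forall>x. x \<noteq> 0 \<longrightarrow> x \<bullet> (A *v x) > 0)"

definition equilibria :: "real^'n^'n \<Rightarrow> ((real^'n^'k) \<times> (real^'k^'k)) set" where
  "equilibria A = {(W, M). sym_pos_def M \<and>
      matrix_inv M ** W ** A = W \<and>
      matrix_inv M ** W ** A ** transpose W ** matrix_inv M = M}"

end

theory Submission
  imports Defs
begin

(*
  For invertible M the two equilibrium equations say exactly W A = M W and W W^T = M^2.
  Then Q = M^-1 W has orthonormal rows and satisfies Q A = M Q, so diagonalising the
  symmetric matrix M = U S U^T turns V = Q^T U into a matrix of orthonormal eigenvectors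
  of A with A V = V S, and W = M Q = U S V^T.  Conversely, such a factorisation satisfies
  both identities, and the entries of S are eigenvalues of the positive definite A, hence
  positive, which makes M = U S U^T positive definite.

  The spectral theorem for real symmetric matrices is proved on the way: on an invariant
  subspace the maximum of the Rayleigh quotient is attained at an eigenvector, and the
  orthogonal complement of a set of eigenvectors is again invariant.
*)

definition diagonal_matrix :: "'a::zero^'n^'n \<Rightarrow> bool" where
  "diagonal_matrix S \<longleftrightarrow> (\<forall>i j. i \<noteq> j \<longrightarrow> S $ i $ j = 0)"

lemma diagonal_matrix_transpose: "diagonal_matrix S \<Longrightarrow> transpose S = S"
  by (auto simp: diagonal_matrix_def transpose_def vec_eq_iff) (metis)

lemma matrix_vector_mult_diagonal:
  fixes S :: "'a::semiring_1^'n^'n"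
  assumes "diagonal_matrix S"
  shows "(S *v x) $ i = S $ i $ i * x $ i"
proof -
  have "(S *v x) $ i = (\<Sum>j\<in>UNIV. S $ i $ j * x $ j)"
    by (simp add: matrix_vector_mult_def)
  also have "\<dots> = (\<Sum>j\<in>UNIV. if j = i then S $ i $ i * x $ i else 0)"
    by (rule sum.cong) (use assms in \<open>auto simp: diagonal_matrix_def\<close>)
  finally show ?thesis by simp
qed

lemma column_matrix_mult_diagonal:
  fixes V :: "real^'k^'n" and S :: "real^'k^'k"
  assumes "diagonal_matrix S"
  shows "column i (V ** S) = S $ i $ i *\<^sub>R column i V"
proof -
  have "(V ** S) $ r $ i = V $ r $ i * S $ i $ i" for r
  proof -
    have "(V ** S) $ r $ i = (\<Sum>j\<in>UNIV. V $ r $ j * S $ j $ i)"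
      by (simp add: matrix_matrix_mult_def)
    also have "\<dots> = (\<Sum>j\<in>UNIV. if j = i then V $ r $ i * S $ i $ i else 0)"
      by (rule sum.cong) (use assms in \<open>auto simp: diagonal_matrix_def\<close>)
    finally show ?thesis by simp
  qed
  then show ?thesis by (simp add: vec_eq_iff column_def mult.commute)
qed

lemma column_matrix_matrix_mult: "column i (A ** B) = A *v column i B"
  by (simp add: vec_eq_iff column_def matrix_matrix_mult_def matrix_vector_mult_def)

lemma matrix_eq_columns: "A = B \<longleftrightarrow> (\<forall>i. column i A = column i B)"
  by (auto simp: vec_eq_iff column_def)

lemma eigenvector_columns_iff:
  fixes A :: "real^'n^'n" and V :: "real^'k^'n" and S :: "real^'k^'k"
  assumes "diagonal_matrix S"
  shows "A ** V = V ** S \<longleftrightarrow> (\<forall>i. A *v column i V = S $ i $ i *\<^sub>R column i V)"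
  unfolding matrix_eq_columns column_matrix_mult_diagonal[OF assms]
  by (simp add: column_matrix_matrix_mult)

lemma symmetric_matrix_inner:
  fixes M :: "real^'n^'n"
  assumes "transpose M = M"
  shows "(M *v x) \<bullet> y = x \<bullet> (M *v y)"
  by (metis assms dot_lmul_matrix vector_transpose_matrix)

lemma symmetric_quadratic_form_maximizer_eigenvector:
  fixes M :: "real^'n^'n"
  assumes sym: "transpose M = M" and T: "subspace T" and inv: "\<And>z. z \<in> T \<Longrightarrow> M *v z \<in> T"
    and x: "x \<in> T" "x \<bullet> x = 1"
    and maximal: "\<And>z. z \<in> T \<Longrightarrow> z \<bullet> (M *v z) \<le> (x \<bullet> (M *v x)) * (z \<bullet> z)"
  shows "M *v x = (x \<bullet> (M *v x)) *\<^sub>R x"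
proof -
  define l where "l = x \<bullet> (M *v x)"
  define y where "y = M *v x - l *\<^sub>R x"
  have "y \<in> T"
    unfolding y_def using inv x T by (simp add: subspace_diff subspace_scale)
  have yx: "y \<bullet> x = 0"
    unfolding y_def l_def using x by (simp add: inner_diff_left inner_commute[of "M *v x" x])
  have yMx: "y \<bullet> (M *v x) = y \<bullet> y"
    using yx by (simp add: y_def inner_diff_right inner_diff_left)
  define C where "C = l * (y \<bullet> y) - y \<bullet> (M *v y)"
  \<comment> \<open>compare \<open>x\<close> with \<open>x + t y\<close>: for small \<open>t > 0\<close> maximality forces \<open>y = 0\<close>\<close>
  have perturb: "2 * t * (y \<bullet> y) \<le> t\<^sup>2 * C" for t
  proof -
    have "x + t *\<^sub>R y \<in> T" using x \<open>y \<in> T\<close> T by (simp add: subspace_add subspace_scale)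
    from maximal[OF this] have
      "(x + t *\<^sub>R y) \<bullet> (M *v (x + t *\<^sub>R y)) \<le> l * ((x + t *\<^sub>R y) \<bullet> (x + t *\<^sub>R y))"
      unfolding l_def .
    moreover have "x \<bullet> (M *v y) = y \<bullet> (M *v x)"
      using symmetric_matrix_inner[OF sym, of y x] by (simp add: inner_commute)
    ultimately show ?thesis using yMx yx x unfolding C_def l_def
      by (simp add: matrix_vector_right_distrib matrix_vector_mult_scaleR inner_add_left
          inner_add_right inner_commute power2_eq_square algebra_simps)
  qed
  have "y = 0"
  proof (rule ccontr)
    assume "y \<noteq> 0"
    then have yy: "y \<bullet> y > 0" by simp
    define t where "t = (y \<bullet> y) / (\<bar>C\<bar> + 1)"
    have t: "t > 0" using yy unfolding t_def by (simp add: add_pos_nonneg)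
    have "2 * (y \<bullet> y) \<le> t * C" using perturb[of t] t by (simp add: power2_eq_square)
    also have "\<dots> \<le> t * \<bar>C\<bar>" using t by (simp add: mult_left_mono)
    also have "\<dots> < y \<bullet> y" unfolding t_def using yy by (simp add: field_simps)
    finally show False using yy by simp
  qed
  then show ?thesis unfolding y_def l_def by simp
qed

lemma quadratic_form_maximizer_exists:
  fixes M :: "real^'n^'n"
  assumes T: "subspace T" and a: "a \<in> T" "a \<noteq> 0"
  shows "\<exists>x\<in>T. x \<bullet> x = 1 \<and> (\<forall>z\<in>T. z \<bullet> (M *v z) \<le> (x \<bullet> (M *v x)) * (z \<bullet> z))"
proof -
  define K where "K = T \<inter> sphere 0 1"
  have "(1 / norm a) *\<^sub>R a \<in> K"
    unfolding K_def using a T by (simp add: subspace_scale)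
  moreover have "compact K"
    unfolding K_def using T by (intro closed_Int_compact closed_subspace compact_sphere)
  moreover have "continuous_on K (\<lambda>x. x \<bullet> (M *v x))"
    by (intro continuous_intros)
  ultimately obtain x where "x \<in> K" and xmax: "\<forall>y\<in>K. y \<bullet> (M *v y) \<le> x \<bullet> (M *v x)"
    using continuous_attains_sup[of K] by blast
  then have "x \<in> T" "x \<bullet> x = 1" unfolding K_def by (auto simp: norm_eq_1)
  moreover have "z \<bullet> (M *v z) \<le> (x \<bullet> (M *v x)) * (z \<bullet> z)" if "z \<in> T" for z
  proof (cases "z = 0")
    case False
    define c where "c = norm z"
    have c: "c > 0" using False c_def by simp
    have "(1 / c) *\<^sub>R z \<in> K" unfolding K_def using that T c c_def
      by (simp add: subspace_scale)
    then have "((1 / c) *\<^sub>R z) \<bullet> (M *v ((1 / c) *\<^sub>R z)) \<le> x \<bullet> (M *v x)"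
      using xmax by blast
    then have "(1 / c)\<^sup>2 * (z \<bullet> (M *v z)) \<le> x \<bullet> (M *v x)"
      by (simp add: matrix_vector_mult_scaleR power2_eq_square algebra_simps)
    then have "z \<bullet> (M *v z) \<le> (x \<bullet> (M *v x)) * c\<^sup>2"
      using c by (simp add: field_simps)
    then show ?thesis by (simp add: c_def power2_norm_eq_inner)
  qed simp
  ultimately show ?thesis by blast
qed

lemma symmetric_matrix_invariant_subspace_eigenvector:
  fixes M :: "real^'n^'n"
  assumes "transpose M = M" and "subspace T" and "\<And>z. z \<in> T \<Longrightarrow> M *v z \<in> T"
    and "a \<in> T" "a \<noteq> 0"
  shows "\<exists>x\<in>T. norm x = 1 \<and> (\<exists>\<mu>. M *v x = \<mu> *\<^sub>R x)"
proof -
  obtain x where "x \<in> T" "x \<bullet> x = 1"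
    and "\<forall>z\<in>T. z \<bullet> (M *v z) \<le> (x \<bullet> (M *v x)) * (z \<bullet> z)"
    using quadratic_form_maximizer_exists[OF assms(2,4,5)] by blast
  then show ?thesis
    using symmetric_quadratic_form_maximizer_eigenvector[OF assms(1-3)] by (metis norm_eq_1)
qed

definition orthonormal_eigenvectors :: "real^'n^'n \<Rightarrow> (real^'n) set \<Rightarrow> bool" where
  "orthonormal_eigenvectors M B \<longleftrightarrow>
     pairwise orthogonal B \<and> (\<forall>b\<in>B. norm b = 1 \<and> (\<exists>\<mu>. M *v b = \<mu> *\<^sub>R b))"

lemma orthonormal_eigenvectors_independent:
  "orthonormal_eigenvectors M B \<Longrightarrow> independent B"
  unfolding orthonormal_eigenvectors_def
  by (metis norm_zero pairwise_orthogonal_independent zero_neq_one)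

lemma orthonormal_eigenvectors_extend:
  fixes M :: "real^'n^'n"
  assumes sym: "transpose M = M" and B: "orthonormal_eigenvectors M B" and "span B \<noteq> UNIV"
  shows "\<exists>x. x \<notin> B \<and> orthonormal_eigenvectors M (insert x B)"
proof -
  define T where "T = {x. \<forall>b\<in>B. b \<bullet> x = 0}"
  have T: "subspace T"
    unfolding T_def subspace_def by (auto simp: inner_add_right)
  have invariant: "M *v z \<in> T" if "z \<in> T" for z
  proof -
    have "b \<bullet> (M *v z) = 0" if "b \<in> B" for b
    proof -
      obtain \<mu> where "M *v b = \<mu> *\<^sub>R b" using B \<open>b \<in> B\<close> unfolding orthonormal_eigenvectors_def by blast
      then have "b \<bullet> (M *v z) = \<mu> * (b \<bullet> z)" using symmetric_matrix_inner[OF sym, of b z] by simp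
      then show ?thesis using \<open>z \<in> T\<close> \<open>b \<in> B\<close> unfolding T_def by simp
    qed
    then show ?thesis unfolding T_def by blast
  qed
  obtain a where "a \<noteq> 0" "\<forall>x\<in>span B. a \<bullet> x = 0"
    using span_not_UNIV_orthogonal[OF \<open>span B \<noteq> UNIV\<close>] by blast
  then have "a \<in> T" unfolding T_def by (auto simp: inner_commute span_base)
  then obtain x where "x \<in> T" "norm x = 1" "\<exists>\<mu>. M *v x = \<mu> *\<^sub>R x"
    using symmetric_matrix_invariant_subspace_eigenvector[OF sym T invariant] \<open>a \<noteq> 0\<close> by blast
  moreover have "x \<notin> B" using \<open>x \<in> T\<close> \<open>norm x = 1\<close> unfolding T_def by (auto simp: norm_eq_1)
  ultimately show ?thesis using B unfolding orthonormal_eigenvectors_def T_def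
    by (auto simp: pairwise_insert orthogonal_def inner_commute)
qed

lemma symmetric_matrix_orthonormal_eigenbasis:
  fixes M :: "real^'n^'n"
  assumes sym: "transpose M = M"
  shows "\<exists>B. orthonormal_eigenvectors M B \<and> card B = CARD('n)"
proof -
  have bound: "finite B \<and> card B \<le> CARD('n)" if "orthonormal_eigenvectors M B" for B
    using independent_bound[OF orthonormal_eigenvectors_independent[OF that]] by simp
  have "orthonormal_eigenvectors M {}" unfolding orthonormal_eigenvectors_def by simp
  then obtain B where B: "orthonormal_eigenvectors M B"
    and Bmax: "\<And>B'. orthonormal_eigenvectors M B' \<Longrightarrow> card B' \<le> card B"
    using ex_has_greatest_nat[of "orthonormal_eigenvectors M" "{}" card "Suc CARD('n)"] bound
    by (metis le_imp_less_Suc)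
  have "span B = UNIV"
  proof (rule ccontr)
    assume "span B \<noteq> UNIV"
    then obtain x where "x \<notin> B" "orthonormal_eigenvectors M (insert x B)"
      using orthonormal_eigenvectors_extend[OF sym B] by blast
    then show False using Bmax bound[OF B] by fastforce
  qed
  then have "card B = dim (UNIV :: (real^'n) set)"
    using basis_card_eq_dim[of B UNIV] orthonormal_eigenvectors_independent[OF B] by simp
  then show ?thesis using B by auto
qed

lemma symmetric_matrix_orthogonal_eigenvectors:
  fixes M :: "real^'n^'n"
  assumes "transpose M = M"
  shows "\<exists>U. orthogonal_matrix U \<and> (\<forall>j. \<exists>\<mu>. M *v column j U = \<mu> *\<^sub>R column j U)"
proof -
  obtain B where B: "orthonormal_eigenvectors M B" and "card B = CARD('n)"
    using symmetric_matrix_orthonormal_eigenbasis[OF assms] by blast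
  moreover from this have "finite B" by (simp add: card_ge_0_finite)
  ultimately obtain h where h: "bij_betw h (UNIV :: 'n set) B"
    using finite_same_card_bij[of "UNIV :: 'n set" B] by auto
  define U :: "real^'n^'n" where "U = (\<chi> i j. h j $ i)"
  have col: "column j U = h j" for j by (simp add: U_def column_def vec_eq_iff)
  have hB: "h j \<in> B" for j using h bij_betwE by blast
  have "h i \<noteq> h j" if "i \<noteq> j" for i j using h that by (metis bij_betw_imp_inj_on injD)
  then have "orthogonal (h i) (h j)" if "i \<noteq> j" for i j
    using B hB that unfolding orthonormal_eigenvectors_def pairwise_def by blast
  moreover have "norm (h j) = 1" "\<exists>\<mu>. M *v h j = \<mu> *\<^sub>R h j" for j
    using B hB unfolding orthonormal_eigenvectors_def by auto
  ultimately have "orthogonal_matrix U" "\<forall>j. \<exists>\<mu>. M *v column j U = \<mu> *\<^sub>R column j U"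
    unfolding orthogonal_matrix_orthonormal_columns col by blast+
  then show ?thesis by blast
qed

theorem symmetric_matrix_diagonalization:
  fixes M :: "real^'n^'n"
  assumes "transpose M = M"
  shows "\<exists>U S. orthogonal_matrix U \<and> diagonal_matrix S \<and> M = U ** S ** transpose U"
proof -
  obtain U where U: "orthogonal_matrix U" and eig: "\<forall>j. \<exists>\<mu>. M *v column j U = \<mu> *\<^sub>R column j U"
    using symmetric_matrix_orthogonal_eigenvectors[OF assms] by blast
  then obtain \<mu> where \<mu>: "\<And>j. M *v column j U = \<mu> j *\<^sub>R column j U" by metis
  define S :: "real^'n^'n" where "S = (\<chi> i j. if i = j then \<mu> j else 0)"
  have S: "diagonal_matrix S" unfolding S_def diagonal_matrix_def by simp
  have "M ** U = U ** S"
    unfolding eigenvector_columns_iff[OF S] using \<mu> by (simp add: S_def)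
  then have "M ** (U ** transpose U) = U ** S ** transpose U" by (simp add: matrix_mul_assoc)
  then have "M = U ** S ** transpose U" using U by (simp add: orthogonal_matrix_def)
  with U S show ?thesis by blast
qed

lemma matrix_inv_right: "invertible M \<Longrightarrow> M ** matrix_inv M = mat 1"
  and matrix_inv_left: "invertible M \<Longrightarrow> matrix_inv M ** M = mat 1"
  unfolding invertible_def matrix_inv_def by (metis (mono_tags, lifting) someI_ex)+

lemma sym_pos_def_invertible:
  fixes M :: "real^'n^'n"
  assumes "sym_pos_def M"
  shows "invertible M"
proof -
  have "M *v x = 0 \<Longrightarrow> x = 0" for x
    using assms unfolding sym_pos_def_def by (metis inner_zero_right less_irrefl)
  then show ?thesis
    by (simp add: invertible_left_inverse matrix_left_invertible_ker)
qed

lemma sym_pos_def_eigenvalue_pos: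
  fixes A :: "real^'n^'n"
  assumes "sym_pos_def A" and "v \<noteq> 0" and "A *v v = \<mu> *\<^sub>R v"
  shows "\<mu> > 0"
proof -
  have "0 < v \<bullet> (A *v v)" using assms(1,2) unfolding sym_pos_def_def by blast
  also have "\<dots> = \<mu> * (v \<bullet> v)" using assms(3) by simp
  finally have "0 < \<mu> * (v \<bullet> v)" .
  moreover have "v \<bullet> v > 0" using assms(2) by simp
  ultimately show ?thesis by (simp add: zero_less_mult_iff)
qed

lemma sym_pos_def_orthogonal_diagonal:
  fixes U S :: "real^'n^'n"
  assumes U: "orthogonal_matrix U" and S: "diagonal_matrix S" and pos: "\<And>i. S $ i $ i > 0"
  shows "sym_pos_def (U ** S ** transpose U)"
  unfolding sym_pos_def_def
proof (intro conjI allI impI)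
  show "transpose (U ** S ** transpose U) = U ** S ** transpose U"
    by (simp add: matrix_transpose_mul diagonal_matrix_transpose[OF S] matrix_mul_assoc)
  fix x :: "real^'n"
  assume "x \<noteq> 0"
  define y where "y = transpose U *v x"
  have "U ** transpose U = mat 1" using U unfolding orthogonal_matrix_def by simp
  then have "U *v y = x" unfolding y_def by (simp only: matrix_vector_mul_assoc matrix_vector_mul_lid)
  with \<open>x \<noteq> 0\<close> obtain j where "y $ j \<noteq> 0" by (metis matrix_vector_mult_0_right vec_eq_iff zero_index)
  have "x \<bullet> ((U ** S ** transpose U) *v x) = y \<bullet> (S *v y)"
    unfolding y_def by (simp add: matrix_vector_mul_assoc[symmetric] dot_lmul_matrix[symmetric])
  also have "\<dots> = (\<Sum>i\<in>UNIV. S $ i $ i * (y $ i)\<^sup>2)"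
    by (simp add: inner_vec_def matrix_vector_mult_diagonal[OF S] power2_eq_square algebra_simps)
  also have "\<dots> > 0"
  proof (rule sum_pos2)
    show "0 < S $ j $ j * (y $ j)\<^sup>2" using pos \<open>y $ j \<noteq> 0\<close> by simp
  qed (auto simp: pos less_imp_le)
  finally show "x \<bullet> ((U ** S ** transpose U) *v x) > 0" .
qed

lemma equilibria_iff:
  "(W, M) \<in> equilibria A \<longleftrightarrow>
     sym_pos_def M \<and> W ** A = M ** W \<and> W ** transpose W = M ** M"
proof (cases "sym_pos_def M")
  case True
  define Mi where "Mi = matrix_inv M"
  have MMi: "M ** Mi = mat 1" and MiM: "Mi ** M = mat 1"
    unfolding Mi_def using matrix_inv_right matrix_inv_left sym_pos_def_invertible[OF True] by auto
  have first: "Mi ** W ** A = W \<longleftrightarrow> W ** A = M ** W"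
    by (metis MMi MiM matrix_mul_assoc matrix_mul_lid)
  have second: "W ** transpose W ** Mi = M \<longleftrightarrow> W ** transpose W = M ** M"
    by (metis MMi MiM matrix_mul_assoc matrix_mul_rid)
  have "(W, M) \<in> equilibria A \<longleftrightarrow> Mi ** W ** A = W \<and> Mi ** W ** A ** transpose W ** Mi = M"
    using True unfolding equilibria_def Mi_def by simp
  also have "\<dots> \<longleftrightarrow> Mi ** W ** A = W \<and> W ** transpose W ** Mi = M"
    by auto
  finally show ?thesis using True first second by simp
qed (simp add: equilibria_def)

lemma equilibrium_conditions_intertwiner:
  fixes A :: "real^'n^'n" and W :: "real^'n^'k" and M :: "real^'k^'k"
  assumes M: "sym_pos_def M" and WA: "W ** A = M ** W" and WW: "W ** transpose W = M ** M"
  shows "\<exists>Q. Q ** transpose Q = mat 1 \<and> Q ** A = M ** Q \<and> W = M ** Q"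
proof -
  have Ms: "transpose M = M" using M unfolding sym_pos_def_def by blast
  define Mi where "Mi = matrix_inv M"
  have MMi: "M ** Mi = mat 1" and MiM: "Mi ** M = mat 1"
    unfolding Mi_def using matrix_inv_right matrix_inv_left sym_pos_def_invertible[OF M] by auto
  define Q where "Q = Mi ** W"
  have MQ: "W = M ** Q" unfolding Q_def by (metis MMi matrix_mul_assoc matrix_mul_lid)
  have "Q ** A = M ** Q"
    unfolding MQ[symmetric] unfolding Q_def by (metis MiM WA matrix_mul_assoc matrix_mul_lid)
  moreover have "Q ** transpose Q = mat 1"
  proof -
    have "Q ** transpose Q = Mi ** (W ** transpose W) ** transpose Mi"
      unfolding Q_def by (simp add: matrix_transpose_mul matrix_mul_assoc)
    also have "\<dots> = (Mi ** M) ** M ** transpose Mi" by (simp add: WW matrix_mul_assoc)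
    also have "\<dots> = transpose (Mi ** transpose M)" by (simp add: MiM matrix_transpose_mul)
    finally show ?thesis using Ms MiM by simp
  qed
  ultimately show ?thesis using MQ by blast
qed

lemma intertwiner_factorization:
  fixes A :: "real^'n^'n" and Q :: "real^'n^'k" and M :: "real^'k^'k"
  assumes A: "transpose A = A" and Ms: "transpose M = M"
    and QQ: "Q ** transpose Q = mat 1" and QA: "Q ** A = M ** Q"
  shows "\<exists>U V S. orthogonal_matrix U \<and> transpose V ** V = mat 1 \<and> diagonal_matrix S \<and>
    (\<forall>i. A *v column i V = S $ i $ i *\<^sub>R column i V) \<and>
    M ** Q = U ** S ** transpose V \<and> M = U ** S ** transpose U"
proof -
  obtain U S where U: "orthogonal_matrix U" and S: "diagonal_matrix S"
    and MU: "M = U ** S ** transpose U"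
    using symmetric_matrix_diagonalization[OF Ms] by blast
  have UtU: "transpose U ** U = mat 1" using U unfolding orthogonal_matrix_def by simp
  have MU': "M ** U = U ** S" unfolding MU by (metis UtU matrix_mul_assoc matrix_mul_rid)
  define V where "V = transpose Q ** U"
  have tV: "transpose V = transpose U ** Q" unfolding V_def by (simp add: matrix_transpose_mul)
  have "transpose V ** V = transpose U ** (Q ** transpose Q) ** U"
    by (simp only: tV) (simp add: V_def matrix_mul_assoc)
  then have VV: "transpose V ** V = mat 1" using QQ UtU by simp
  have "A ** V = transpose (Q ** transpose A) ** U"
    unfolding V_def by (simp add: matrix_transpose_mul matrix_mul_assoc)
  also have "\<dots> = transpose Q ** (M ** U)"
    using A Ms QA by (simp add: matrix_transpose_mul matrix_mul_assoc)
  also have "\<dots> = V ** S" unfolding MU' V_def by (simp add: matrix_mul_assoc)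
  finally have "\<forall>i. A *v column i V = S $ i $ i *\<^sub>R column i V"
    using eigenvector_columns_iff[OF S] by blast
  moreover have "M ** Q = U ** S ** transpose V"
    unfolding MU tV by (simp add: matrix_mul_assoc)
  ultimately show ?thesis using U VV S MU by blast
qed

lemma equilibrium_conditions_imp_factorization:
  fixes A :: "real^'n^'n" and W :: "real^'n^'k" and M :: "real^'k^'k"
  assumes A: "transpose A = A" and M: "sym_pos_def M"
    and WA: "W ** A = M ** W" and WW: "W ** transpose W = M ** M"
  shows "\<exists>U V S. orthogonal_matrix U \<and> transpose V ** V = mat 1 \<and> diagonal_matrix S \<and>
    (\<forall>i. A *v column i V = S $ i $ i *\<^sub>R column i V) \<and>
    W = U ** S ** transpose V \<and> M = U ** S ** transpose U"
proof -
  obtain Q where "Q ** transpose Q = mat 1" "Q ** A = M ** Q" "W = M ** Q"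
    using equilibrium_conditions_intertwiner[OF M WA WW] by blast
  moreover have "transpose M = M" using M unfolding sym_pos_def_def by blast
  ultimately show ?thesis using intertwiner_factorization[OF A] by blast
qed

lemma factorization_imp_equilibrium_conditions:
  fixes A :: "real^'n^'n" and U S M :: "real^'k^'k" and V :: "real^'k^'n" and W :: "real^'n^'k"
  assumes A: "sym_pos_def A" and U: "orthogonal_matrix U" and VV: "transpose V ** V = mat 1"
    and S: "diagonal_matrix S" and eig: "\<forall>i. A *v column i V = S $ i $ i *\<^sub>R column i V"
    and W_eq: "W = U ** S ** transpose V" and M_eq: "M = U ** S ** transpose U"
  shows "sym_pos_def M \<and> W ** A = M ** W \<and> W ** transpose W = M ** M"
  unfolding W_eq M_eq
proof (intro conjI)
  have "column i V \<noteq> 0" for i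
    using arg_cong[OF VV, of "\<lambda>X. X $ i $ i"] by (auto simp: matrix_mult_transpose_dot_column mat_def)
  then have "S $ i $ i > 0" for i
    using sym_pos_def_eigenvalue_pos[OF A] eig by blast
  then show "sym_pos_def (U ** S ** transpose U)"
    using sym_pos_def_orthogonal_diagonal[OF U S] by blast
  have UtU: "transpose U ** U = mat 1" using U unfolding orthogonal_matrix_def by simp
  have St: "transpose S = S" using diagonal_matrix_transpose[OF S] .
  have VtA: "transpose V ** A = S ** transpose V"
    using eig A St unfolding eigenvector_columns_iff[OF S, symmetric] sym_pos_def_def
    by (metis matrix_transpose_mul)
  have "(U ** S ** transpose V) ** A = U ** S ** (transpose V ** A)"
    by (simp add: matrix_mul_assoc)
  also have "\<dots> = U ** S ** ((transpose U ** U) ** (S ** transpose V))"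
    by (simp add: VtA UtU)
  also have "\<dots> = (U ** S ** transpose U) ** (U ** S ** transpose V)"
    by (simp add: matrix_mul_assoc)
  finally show "(U ** S ** transpose V) ** A = (U ** S ** transpose U) ** (U ** S ** transpose V)" .
  have "(U ** S ** transpose V) ** transpose (U ** S ** transpose V) =
      U ** S ** (transpose V ** V) ** S ** transpose U"
    by (simp add: matrix_transpose_mul St matrix_mul_assoc)
  also have "\<dots> = U ** S ** (transpose U ** U) ** S ** transpose U"
    by (simp add: VV UtU)
  also have "\<dots> = (U ** S ** transpose U) ** (U ** S ** transpose U)"
    by (simp add: matrix_mul_assoc)
  finally show "(U ** S ** transpose V) ** transpose (U ** S ** transpose V) =
      (U ** S ** transpose U) ** (U ** S ** transpose U)" .
qed

theorem lemma1:
  fixes A :: "real^'n^'n" and W :: "real^'n^'k" and M :: "real^'k^'k" and \<tau> :: real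
  assumes "CARD('k) < CARD('n)"
    and "\<tau> > 0"
    and "sym_pos_def A"
  shows "(W, M) \<in> equilibria A \<longleftrightarrow>
    (\<exists>(U :: real^'k^'k) (V :: real^'k^'n) (S :: real^'k^'k).
       orthogonal_matrix U \<and>
       transpose V ** V = mat 1 \<and>
       (\<forall>i j. i \<noteq> j \<longrightarrow> S $ i $ j = 0) \<and>
       (\<forall>i. A *v column i V = S $ i $ i *\<^sub>R column i V) \<and>
       W = U ** S ** transpose V \<and>
       M = U ** S ** transpose U)"
proof -
  have "transpose A = A" using assms(3) unfolding sym_pos_def_def by blast
  then show ?thesis
    unfolding equilibria_iff diagonal_matrix_def[symmetric]
    using equilibrium_conditions_imp_factorization factorization_imp_equilibrium_conditions[OF assms(3)]
    by metis
qed

end
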